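(* Consider a multi-sender single-uniprior index-coding instance with binary messages, information-flow graph $\mathcal{G}$ and message graph $\mathcal{U}$. Let $\mathcal{T}_1,\dots,\mathcal{T}_k$ be pairwise vertex-disjoint connecting trees. Then \[ \tilde{\ell}^*(\mathcal{G},\mathcal{U}) \leq V_{\mathrm{out}}(\mathcal{G}) - \big(N_{\mathrm{conn}}(\mathcal{G},\mathcal{U}) + k\big), \] where $N_{\mathrm{conn}}(\mathcal{G},\mathcal{U})$ is the number of message-connected leaf SCCs of $\mathcal{G}$. In particular the bound holds with $k$ replaced by the maximum number of pairwise vertex-disjoint connecting trees.
   Context: Multi-sender single-uniprior index coding with binary messages: there are $n$ receivers and $n$ independent messages $x_1,\dots,x_n$, each a single bit uniformly distributed on $\{0,1\}$. Receiver $i$ knows $x_i$ a priori and requests a set of messages not containing $x_i$. The information-flow graph is the directed graph $\mathcal{G}=(\mathcal{V},\mathcal{A})$, $\mathcal{V}=\{1,\dots,n\}$, with an arc $(j\to i)$ iff receiver $i$ requests $x_j$. There are $S$ senders; sender $s$ knows a subset $\mathcal{M}_s$ of the messages, and every message is known to some sender. An index code consists of, for each sender $s$, an encoding function mapping the messages in $\mathcal{M}_s$ to $\ell_s$ bits, and for each receiver $i$ a decoding function that, from all senders' outputs together with $x_i$, returns every message requested by $i$, for all message values; its length is $\sum_s \ell_s$. $\tilde{\ell}^*(\mathcal{G},\mathcal{U})$ is the minimum length of an index code for the instance. The message graph $\mathcal{U}$ is the undirected graph on $\mathcal{V}$ with an edge $\{i,j\}$ iff some sender knows both $x_i$ and $x_j$.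 A leaf vertex of $\mathcal{G}$ has no outgoing arcs; $V_{\mathrm{out}}(\mathcal{G})$ is the number of non-leaf vertices. A leaf SCC of $\mathcal{G}$ is a strongly connected component with at least two vertices and no arc from it to a vertex outside it. A leaf SCC with vertex set $\mathcal{V}_S$ is message-connected iff the subgraph of $\mathcal{U}$ induced by $\mathcal{V}_S$ is connected. A connecting tree is a subgraph $\mathcal{T}=(\mathcal{V}^{\mathrm T},\mathcal{E}^{\mathrm T})$ of $\mathcal{U}$ that is a tree (connected, acyclic), such that every vertex of $\mathcal{V}^{\mathrm T}$ has at least one outgoing arc in $\mathcal{G}$ and all its outgoing arcs go to vertices in $\mathcal{V}^{\mathrm T}$, and no vertex of $\mathcal{V}^{\mathrm T}$ belongs to a message-connected leaf SCC of $\mathcal{G}$. *)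

theory Defs
  imports Main
begin

text \<open>Vertices (receivers / messages) are 0..<n. Receiver i requests the set R i.
  Senders are 0..<S, sender s knows the messages in M s.
  A message assignment is x :: nat \<Rightarrow> bool (only the values on 0..<n matter).\<close>

definition valid_instance :: "nat \<Rightarrow> (nat \<Rightarrow> nat set) \<Rightarrow> nat \<Rightarrow> (nat \<Rightarrow> nat set) \<Rightarrow> bool" where
  "valid_instance n R S M \<longleftrightarrow>
     (\<forall>i<n. R i \<subseteq> {..<n} \<and> i \<notin> R i) \<and>
     (\<forall>s<S. M s \<subseteq> {..<n}) \<and>
     (\<forall>j<n. \<exists>s<S. j \<in> M s)"

definition is_index_code ::
  "nat \<Rightarrow> (nat \<Rightarrow> nat set) \<Rightarrow> nat \<Rightarrow> (nat \<Rightarrow> nat set) \<Rightarrow> (nat \<Rightarrow> nat)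
   \<Rightarrow> (nat \<Rightarrow> (nat \<Rightarrow> bool) \<Rightarrow> bool list)
   \<Rightarrow> (nat \<Rightarrow> (nat \<Rightarrow> bool list) \<Rightarrow> bool \<Rightarrow> nat \<Rightarrow> bool) \<Rightarrow> bool" where
  "is_index_code n R S M l E D \<longleftrightarrow>
     (\<forall>s<S. \<forall>x. length (E s x) = l s) \<and>
     (\<forall>s<S. \<forall>x y. (\<forall>j\<in>M s. x j = y j) \<longrightarrow> E s x = E s y) \<and>
     (\<forall>i<n. \<forall>x. \<forall>j\<in>R i.
        D i (\<lambda>s. if s < S then E s x else []) (x i) j = x j)"

definition min_index_code_length :: "nat \<Rightarrow> (nat \<Rightarrow> nat set) \<Rightarrow> nat \<Rightarrow> (nat \<Rightarrow> nat set) \<Rightarrow> nat" where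
  "min_index_code_length n R S M =
     (LEAST L. \<exists>l E D. is_index_code n R S M l E D \<and> L = (\<Sum>s<S. l s))"

definition arcs :: "nat \<Rightarrow> (nat \<Rightarrow> nat set) \<Rightarrow> (nat \<times> nat) set" where
  "arcs n R = {(j, i). i < n \<and> j \<in> R i}"

definition non_leaf :: "nat \<Rightarrow> (nat \<Rightarrow> nat set) \<Rightarrow> nat \<Rightarrow> bool" where
  "non_leaf n R v \<longleftrightarrow> (\<exists>w. (v, w) \<in> arcs n R)"

definition V_out :: "nat \<Rightarrow> (nat \<Rightarrow> nat set) \<Rightarrow> nat" where
  "V_out n R = card {v. v < n \<and> non_leaf n R v}"

definition scc_of :: "nat \<Rightarrow> (nat \<Rightarrow> nat set) \<Rightarrow> nat \<Rightarrow> nat set" where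
  "scc_of n R v = {u. u < n \<and> (v, u) \<in> (arcs n R)\<^sup>* \<and> (u, v) \<in> (arcs n R)\<^sup>*}"

definition is_scc :: "nat \<Rightarrow> (nat \<Rightarrow> nat set) \<Rightarrow> nat set \<Rightarrow> bool" where
  "is_scc n R C \<longleftrightarrow> (\<exists>v<n. C = scc_of n R v)"

definition is_leaf_scc :: "nat \<Rightarrow> (nat \<Rightarrow> nat set) \<Rightarrow> nat set \<Rightarrow> bool" where
  "is_leaf_scc n R C \<longleftrightarrow> is_scc n R C \<and> card C \<ge> 2 \<and>
     (\<forall>u\<in>C. \<forall>w. (u, w) \<in> arcs n R \<longrightarrow> w \<in> C)"

definition msg_edge :: "nat \<Rightarrow> (nat \<Rightarrow> nat set) \<Rightarrow> nat \<Rightarrow> nat \<Rightarrow> bool" where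
  "msg_edge S M i j \<longleftrightarrow> i \<noteq> j \<and> (\<exists>s<S. i \<in> M s \<and> j \<in> M s)"

definition msg_connected :: "nat \<Rightarrow> (nat \<Rightarrow> nat set) \<Rightarrow> nat set \<Rightarrow> bool" where
  "msg_connected S M C \<longleftrightarrow>
     (\<forall>u\<in>C. \<forall>w\<in>C. (u, w) \<in> {(a, b). a \<in> C \<and> b \<in> C \<and> msg_edge S M a b}\<^sup>*)"

definition N_conn :: "nat \<Rightarrow> (nat \<Rightarrow> nat set) \<Rightarrow> nat \<Rightarrow> (nat \<Rightarrow> nat set) \<Rightarrow> nat" where
  "N_conn n R S M = card {C. is_leaf_scc n R C \<and> msg_connected S M C}"

definition edge_rel :: "nat set set \<Rightarrow> (nat \<times> nat) set" where
  "edge_rel E = {(a, b). {a, b} \<in> E}"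

text \<open>A tree: finite nonempty vertex set, edges are 2-element subsets of the vertex set,
  connected, and acyclic (every edge is a bridge, i.e. its endpoints are not connected
  once the edge is removed).\<close>
definition is_tree :: "nat set \<Rightarrow> nat set set \<Rightarrow> bool" where
  "is_tree V E \<longleftrightarrow> finite V \<and> V \<noteq> {} \<and>
     (\<forall>e\<in>E. \<exists>a b. a \<noteq> b \<and> a \<in> V \<and> b \<in> V \<and> e = {a, b}) \<and>
     (\<forall>u\<in>V. \<forall>w\<in>V. (u, w) \<in> (edge_rel E)\<^sup>*) \<and>
     (\<forall>a b. {a, b} \<in> E \<longrightarrow> (a, b) \<notin> (edge_rel (E - {{a, b}}))\<^sup>*)"

definition is_connecting_tree ::
  "nat \<Rightarrow> (nat \<Rightarrow> nat set) \<Rightarrow> nat \<Rightarrow> (nat \<Rightarrow> nat set) \<Rightarrow> nat set \<Rightarrow> nat set set \<Rightarrow> bool" where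
  "is_connecting_tree n R S M VT ET \<longleftrightarrow>
     VT \<subseteq> {..<n} \<and>
     is_tree VT ET \<and>
     (\<forall>a b. {a, b} \<in> ET \<longrightarrow> msg_edge S M a b) \<and>
     (\<forall>v\<in>VT. non_leaf n R v \<and> (\<forall>w. (v, w) \<in> arcs n R \<longrightarrow> w \<in> VT)) \<and>
     (\<forall>v\<in>VT. \<not> (\<exists>C. is_leaf_scc n R C \<and> msg_connected S M C \<and> v \<in> C))"

end

theory Submission
  imports Defs
begin

(* A leaf vertex is requested by nobody, and every other vertex can send its own bit. Now let C
   be a set of non-leaf vertices closed under outgoing arcs and connected in the message graph.
   Fix a root of C and a spanning tree of message edges; each non-root v in C transmits the XOR
   of x v and x (parent v), which one sender knows. Telescoping along tree paths, a receiver i in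
   C learns whether x v equals the root's bit for every v in C, hence with x i every x v, and
   everything i requests lies in C. So each such set saves one bit, and the message-connected
   leaf SCCs together with the connecting trees form a pairwise disjoint family of such sets. *)

lemma min_index_code_length_le_card_bits:
  fixes bit :: "'b::linorder \<Rightarrow> (nat \<Rightarrow> bool) \<Rightarrow> bool"
  assumes "finite B"
    and local: "\<forall>v\<in>B. \<exists>s<S. \<forall>x y. (\<forall>j\<in>M s. x j = y j) \<longrightarrow> bit v x = bit v y"
    and decodable:
      "\<forall>i<n. \<forall>j\<in>R i. \<forall>x y. x i = y i \<and> (\<forall>v\<in>B. bit v x = bit v y) \<longrightarrow> x j = y j"
  shows "min_index_code_length n R S M \<le> card B"
proof -
  obtain \<sigma> where \<sigma>: "\<forall>v\<in>B. \<sigma> v < S \<and> (\<forall>x y. (\<forall>j\<in>M (\<sigma> v). x j = y j) \<longrightarrow> bit v x = bit v y)"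
    using bchoice[OF local] by blast
  define part where "part s = {v \<in> B. \<sigma> v = s}" for s
  define E where "E s x = map (\<lambda>v. bit v x) (sorted_list_of_set (part s))" for s x
  define l where "l s = card (part s)" for s
  \<comment> \<open>Receiver i decodes by picking any assignment consistent with its own bit and all transmissions.\<close>
  define D where "D i w c j \<longleftrightarrow> (\<exists>y. y i = c \<and> (\<forall>s<S. w s = E s y) \<and> y j)"
    for i and w :: "nat \<Rightarrow> bool list" and c j
  have fin_part: "finite (part s)" for s
    using \<open>finite B\<close> by (simp add: part_def)
  have E_eq_iff: "E s x = E s y \<longleftrightarrow> (\<forall>v\<in>part s. bit v x = bit v y)" for s x y
    using fin_part by (simp add: E_def map_eq_conv)
  have E_eq_bits: "\<forall>v\<in>B. bit v x = bit v y" if "\<forall>s<S. E s x = E s y" for x y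
    using that \<sigma> by (auto simp: E_eq_iff part_def)
  have "is_index_code n R S M l E D"
    unfolding is_index_code_def
  proof (intro conjI allI impI ballI)
    show "length (E s x) = l s" for s x
      using fin_part by (simp add: E_def l_def)
    show "E s x = E s y" if "s < S" "\<forall>j\<in>M s. x j = y j" for s x y
      using that \<sigma> by (auto simp: E_eq_iff part_def)
    show "D i (\<lambda>s. if s < S then E s x else []) (x i) j = x j" if "i < n" "j \<in> R i" for i x j
    proof -
      have "x j = y j" if "y i = x i" "\<forall>s<S. E s x = E s y" for y
        using that decodable E_eq_bits \<open>i < n\<close> \<open>j \<in> R i\<close> by metis
      then show ?thesis
        unfolding D_def by (cases "x j") auto
    qed
  qed
  moreover have "(\<Sum>s<S. l s) = card B"
    using sum.group[OF \<open>finite B\<close> finite_lessThan, where g = \<sigma> and h = "\<lambda>_. 1::nat"] \<sigma>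
    by (auto simp: l_def part_def)
  ultimately show ?thesis
    unfolding min_index_code_length_def by (metis (mono_tags) Least_le)
qed

lemma reachable_parent_function:
  assumes "Rel \<subseteq> C \<times> C" and "\<forall>v\<in>C. (r, v) \<in> Rel\<^sup>*"
  obtains par where "\<forall>v\<in>C - {r}. (par v, v) \<in> Rel"
    and "\<And>f. \<forall>v\<in>C - {r}. f (par v) = f v \<Longrightarrow> \<forall>v\<in>C. f v = f r"
proof -
  define dist where "dist v = (LEAST m. (r, v) \<in> Rel ^^ m)" for v
  have "\<exists>p. (p, v) \<in> Rel \<and> dist p < dist v" if v: "v \<in> C - {r}" for v
  proof -
    obtain m where "(r, v) \<in> Rel ^^ m"
      using assms(2) v rtrancl_power by blast
    then have path: "(r, v) \<in> Rel ^^ dist v"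
      unfolding dist_def by (rule LeastI)
    then obtain d where d: "dist v = Suc d"
      using v by (cases "dist v") auto
    with path obtain p where "(r, p) \<in> Rel ^^ d" and "(p, v) \<in> Rel"
      by auto
    moreover from this have "dist p \<le> d"
      unfolding dist_def by (intro Least_le)
    ultimately show ?thesis
      using d by auto
  qed
  then obtain par where par: "\<forall>v\<in>C - {r}. (par v, v) \<in> Rel \<and> dist (par v) < dist v"
    by metis
  have "\<forall>v\<in>C. f v = f r" if edges: "\<forall>v\<in>C - {r}. f (par v) = f v" for f
  proof
    show "f v = f r" if "v \<in> C" for v
      using that
    proof (induction "dist v" arbitrary: v rule: less_induct)
      case less
      show ?case
      proof (cases "v = r")
        case False
        then have "(par v, v) \<in> Rel" and "dist (par v) < dist v"
          using par less.prems by auto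
        then have "f (par v) = f r"
          using less.hyps assms(1) by blast
        then show ?thesis
          using edges less.prems False by auto
      qed simp
    qed
  qed
  with par show thesis
    by (intro that) auto
qed

lemma disjoint_family_parent_function:
  assumes "pairwise disjnt G" and "\<forall>C\<in>G. C \<noteq> {} \<and> msg_connected S M C"
  obtains rt par where "\<And>C. C \<in> G \<Longrightarrow> rt C \<in> C"
    and "\<And>C v. C \<in> G \<Longrightarrow> v \<in> C - {rt C} \<Longrightarrow> msg_edge S M (par v) v"
    and "\<And>C (f :: nat \<Rightarrow> 'b). C \<in> G \<Longrightarrow> \<forall>v\<in>C - {rt C}. f (par v) = f v \<Longrightarrow>
      \<forall>v\<in>C. f v = f (rt C)"
proof -
  define Rel where "Rel C = {(a, b). a \<in> C \<and> b \<in> C \<and> msg_edge S M a b}" for C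
  define rt where "rt C = (SOME r. r \<in> C)" for C :: "nat set"
  have rt: "rt C \<in> C" if "C \<in> G" for C
    using assms(2) that unfolding rt_def by (metis some_in_eq)
  have "\<forall>C\<in>G. \<exists>par. (\<forall>v\<in>C - {rt C}. (par v, v) \<in> Rel C) \<and>
      (\<forall>f :: nat \<Rightarrow> 'b. (\<forall>v\<in>C - {rt C}. f (par v) = f v) \<longrightarrow> (\<forall>v\<in>C. f v = f (rt C)))"
  proof
    fix C assume "C \<in> G"
    have "Rel C \<subseteq> C \<times> C"
      by (auto simp: Rel_def)
    moreover have "\<forall>v\<in>C. (rt C, v) \<in> (Rel C)\<^sup>*"
      using assms(2) rt[OF \<open>C \<in> G\<close>] \<open>C \<in> G\<close> unfolding msg_connected_def Rel_def by blast
    ultimately obtain par where "\<forall>v\<in>C - {rt C}. (par v, v) \<in> Rel C"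
      and "\<And>f :: nat \<Rightarrow> 'b. \<forall>v\<in>C - {rt C}. f (par v) = f v \<Longrightarrow> \<forall>v\<in>C. f v = f (rt C)"
      by (rule reachable_parent_function) blast+
    then show "\<exists>par. (\<forall>v\<in>C - {rt C}. (par v, v) \<in> Rel C) \<and>
      (\<forall>f :: nat \<Rightarrow> 'b. (\<forall>v\<in>C - {rt C}. f (par v) = f v) \<longrightarrow> (\<forall>v\<in>C. f v = f (rt C)))"
      by (intro exI[of _ par] conjI allI impI) simp_all
  qed
  from bchoice[OF this] obtain parC where parC: "\<forall>C\<in>G. (\<forall>v\<in>C - {rt C}. (parC C v, v) \<in> Rel C) \<and>
      (\<forall>f :: nat \<Rightarrow> 'b. (\<forall>v\<in>C - {rt C}. f (parC C v) = f v) \<longrightarrow> (\<forall>v\<in>C. f v = f (rt C)))"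
    ..
  define par where "par v = parC (THE C. C \<in> G \<and> v \<in> C) v" for v
  have par: "par v = parC C v" if "C \<in> G" "v \<in> C" for C v
  proof -
    have "(THE C. C \<in> G \<and> v \<in> C) = C"
      using assms(1) that by (intro the_equality) (auto simp: pairwise_def disjnt_def)
    then show ?thesis
      by (simp add: par_def)
  qed
  show thesis
  proof (rule that)
    show "rt C \<in> C" if "C \<in> G" for C
      using rt that .
    show "msg_edge S M (par v) v" if "C \<in> G" "v \<in> C - {rt C}" for C v
      using parC par that by (auto simp: Rel_def)
    show "\<forall>v\<in>C. f v = f (rt C)" if "C \<in> G" "\<forall>v\<in>C - {rt C}. f (par v) = f v"
      for C and f :: "nat \<Rightarrow> 'b"
    proof -
      have "\<forall>v\<in>C - {rt C}. f (parC C v) = f v"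
        using that par by simp
      with parC \<open>C \<in> G\<close> show ?thesis
        by blast
    qed
  qed
qed

lemma pairwise_disjnt_Un:
  assumes "pairwise disjnt A" and "pairwise disjnt B" and "\<forall>X\<in>A. \<forall>Y\<in>B. disjnt X Y"
  shows "pairwise disjnt (A \<union> B)"
  using assms unfolding pairwise_def disjnt_def by blast

lemma card_Diff_inj_image_add:
  assumes "finite A" and "f ` G \<subseteq> A" and "inj_on f G"
  shows "card (A - f ` G) + card G = card A"
  using assms card_Diff_subset[of "f ` G" A] card_mono[of A "f ` G"] card_image[of f G]
  by (simp add: finite_subset)

definition out_closed_msg_connected ::
  "nat \<Rightarrow> (nat \<Rightarrow> nat set) \<Rightarrow> nat \<Rightarrow> (nat \<Rightarrow> nat set) \<Rightarrow> nat set \<Rightarrow> bool" where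
  "out_closed_msg_connected n R S M C \<longleftrightarrow> C \<noteq> {} \<and>
     (\<forall>v\<in>C. v < n \<and> non_leaf n R v) \<and>
     (\<forall>u\<in>C. \<forall>w. (u, w) \<in> arcs n R \<longrightarrow> w \<in> C) \<and>
     msg_connected S M C"

lemma min_index_code_length_add_card_le_V_out:
  assumes valid: "valid_instance n R S M"
    and "finite G" and disj: "pairwise disjnt G"
    and groups: "\<forall>C\<in>G. out_closed_msg_connected n R S M C"
  shows "min_index_code_length n R S M + card G \<le> V_out n R"
proof -
  obtain rt par where rt: "\<And>C. C \<in> G \<Longrightarrow> rt C \<in> C"
    and par: "\<And>C v. C \<in> G \<Longrightarrow> v \<in> C - {rt C} \<Longrightarrow> msg_edge S M (par v) v"
    and telescope: "\<And>C (f :: nat \<Rightarrow> bool). C \<in> G \<Longrightarrow> \<forall>v\<in>C - {rt C}. f (par v) = f v \<Longrightarrow>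
      \<forall>v\<in>C. f v = f (rt C)"
  proof (rule disjoint_family_parent_function[OF disj])
    show "\<forall>C\<in>G. C \<noteq> {} \<and> msg_connected S M C"
      using groups unfolding out_closed_msg_connected_def by blast
  qed blast
  define NL where "NL = {v. v < n \<and> non_leaf n R v}"
  define B where "B = NL - rt ` G"
  define bit where "bit v x = (if v \<in> \<Union>G then x v \<noteq> x (par v) else x v)" for v x
  have same_group: "C = C'" if "C \<in> G" "C' \<in> G" "v \<in> C" "v \<in> C'" for C C' v
    using disj that by (auto simp: pairwise_def disjnt_def)
  have non_root_in_B: "v \<in> B" if "C \<in> G" "v \<in> C" "v \<noteq> rt C" for C v
    using that groups same_group rt unfolding B_def NL_def out_closed_msg_connected_def by blast
  have "min_index_code_length n R S M \<le> card B"
  proof (rule min_index_code_length_le_card_bits)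
    show "finite B"
      by (simp add: B_def NL_def)
    show "\<forall>v\<in>B. \<exists>s<S. \<forall>x y. (\<forall>j\<in>M s. x j = y j) \<longrightarrow> bit v x = bit v y"
    proof
      fix v assume "v \<in> B"
      show "\<exists>s<S. \<forall>x y. (\<forall>j\<in>M s. x j = y j) \<longrightarrow> bit v x = bit v y"
      proof (cases "v \<in> \<Union>G")
        case True
        then obtain C where "C \<in> G" "v \<in> C" by blast
        moreover have "v \<noteq> rt C"
          using \<open>v \<in> B\<close> \<open>C \<in> G\<close> by (auto simp: B_def)
        ultimately obtain s where "s < S" "par v \<in> M s" "v \<in> M s"
          using par by (auto simp: msg_edge_def)
        then show ?thesis
          using True unfolding bit_def by auto
      next
        case False
        have "v < n"
          using \<open>v \<in> B\<close> by (simp add: B_def NL_def)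
        then obtain s where "s < S" "v \<in> M s"
          using valid unfolding valid_instance_def by blast
        then show ?thesis
          using False unfolding bit_def by auto
      qed
    qed
    show "\<forall>i<n. \<forall>j\<in>R i. \<forall>x y. x i = y i \<and> (\<forall>v\<in>B. bit v x = bit v y) \<longrightarrow> x j = y j"
    proof (intro allI impI ballI, elim conjE)
      fix i j x y
      assume "i < n" "j \<in> R i" and "x i = y i" and bits: "\<forall>v\<in>B. bit v x = bit v y"
      then have arc: "(j, i) \<in> arcs n R"
        by (simp add: arcs_def)
      show "x j = y j"
      proof (cases "j \<in> \<Union>G")
        case True
        then obtain C where "C \<in> G" "j \<in> C" by blast
        then have "i \<in> C"
          using groups arc unfolding out_closed_msg_connected_def by blast
        have "(x (par v) = y (par v)) = (x v = y v)" if "v \<in> C - {rt C}" for v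
        proof -
          have "bit v x = bit v y" and "v \<in> \<Union>G"
            using that bits non_root_in_B \<open>C \<in> G\<close> by auto
          then show ?thesis
            unfolding bit_def by auto
        qed
        then have "\<forall>v\<in>C. (x v = y v) = (x (rt C) = y (rt C))"
          by (intro telescope[OF \<open>C \<in> G\<close>, where f = "\<lambda>v. x v = y v"] ballI)
        then show ?thesis
          using \<open>i \<in> C\<close> \<open>j \<in> C\<close> \<open>x i = y i\<close> by simp
      next
        case False
        have "j < n"
          using valid \<open>i < n\<close> \<open>j \<in> R i\<close> unfolding valid_instance_def by blast
        moreover have "j \<notin> rt ` G"
          using False rt by auto
        ultimately have "j \<in> B"
          using arc unfolding B_def NL_def non_leaf_def by blast
        then show ?thesis
          using bits False unfolding bit_def by auto
      qed
    qed
  qed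
  moreover have "card B + card G = card NL"
    unfolding B_def
  proof (rule card_Diff_inj_image_add)
    show "finite NL"
      by (simp add: NL_def)
    show "rt ` G \<subseteq> NL"
      using rt groups unfolding NL_def out_closed_msg_connected_def by blast
    show "inj_on rt G"
      using rt same_group by (metis inj_onI)
  qed
  ultimately show ?thesis
    unfolding V_out_def NL_def by linarith
qed

lemma scc_of_eq:
  assumes "u \<in> scc_of n R v"
  shows "scc_of n R u = scc_of n R v"
  using assms unfolding scc_of_def by (auto intro: rtrancl_trans)

lemma leaf_sccs_disjnt:
  assumes "is_leaf_scc n R C" and "is_leaf_scc n R C'" and "C \<noteq> C'"
  shows "disjnt C C'"
  using assms scc_of_eq unfolding is_leaf_scc_def is_scc_def disjnt_def by blast

lemma finite_leaf_sccs: "finite {C. is_leaf_scc n R C}"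
proof (rule finite_subset)
  show "{C. is_leaf_scc n R C} \<subseteq> scc_of n R ` {..<n}"
    unfolding is_leaf_scc_def is_scc_def by blast
qed simp

lemma leaf_scc_non_leaf:
  assumes "is_leaf_scc n R C" and "u \<in> C"
  shows "u < n \<and> non_leaf n R u"
proof -
  have "\<not> C \<subseteq> {u}"
    using assms(1) card_mono[of "{u}" C] unfolding is_leaf_scc_def by auto
  then obtain w where "w \<in> C" and "w \<noteq> u"
    by blast
  moreover obtain v where "C = scc_of n R v"
    using assms(1) unfolding is_leaf_scc_def is_scc_def by blast
  ultimately have "(u, w) \<in> (arcs n R)\<^sup>*" and "u < n"
    using assms(2) unfolding scc_of_def by (auto intro: rtrancl_trans)
  then show ?thesis
    using \<open>w \<noteq> u\<close> unfolding non_leaf_def by (metis converse_rtranclE)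
qed

lemma out_closed_msg_connected_leaf_scc:
  assumes "is_leaf_scc n R C" and "msg_connected S M C"
  shows "out_closed_msg_connected n R S M C"
  using assms leaf_scc_non_leaf unfolding out_closed_msg_connected_def is_leaf_scc_def
  by fastforce

lemma out_closed_msg_connected_connecting_tree:
  assumes "is_connecting_tree n R S M VT ET"
  shows "out_closed_msg_connected n R S M VT"
proof -
  have tree: "is_tree VT ET" and edges: "\<forall>a b. {a, b} \<in> ET \<longrightarrow> msg_edge S M a b"
    and out: "\<forall>v\<in>VT. non_leaf n R v \<and> (\<forall>w. (v, w) \<in> arcs n R \<longrightarrow> w \<in> VT)"
    and "VT \<subseteq> {..<n}"
    using assms unfolding is_connecting_tree_def by blast+
  then have "VT \<noteq> {}" and ends: "\<forall>e\<in>ET. \<exists>a b. a \<noteq> b \<and> a \<in> VT \<and> b \<in> VT \<and> e = {a, b}"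
    and conn: "\<forall>u\<in>VT. \<forall>w\<in>VT. (u, w) \<in> (edge_rel ET)\<^sup>*"
    unfolding is_tree_def by blast+
  have "edge_rel ET \<subseteq> {(a, b). a \<in> VT \<and> b \<in> VT \<and> msg_edge S M a b}"
  proof (clarsimp simp: edge_rel_def)
    fix a b assume "{a, b} \<in> ET"
    moreover from ends this obtain a' b' where "a' \<in> VT" "b' \<in> VT" "{a, b} = {a', b'}"
      by blast
    moreover have "msg_edge S M a b"
      using edges \<open>{a, b} \<in> ET\<close> by blast
    ultimately show "a \<in> VT \<and> b \<in> VT \<and> msg_edge S M a b"
      by (auto simp: doubleton_eq_iff)
  qed
  with conn have "msg_connected S M VT"
    unfolding msg_connected_def by (meson rtrancl_mono subsetD)
  with \<open>VT \<noteq> {}\<close> out \<open>VT \<subseteq> {..<n}\<close> show ?thesis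
    unfolding out_closed_msg_connected_def by blast
qed

theorem theorem6:
  fixes n S k :: nat and R M :: "nat \<Rightarrow> nat set"
    and VT :: "nat \<Rightarrow> nat set" and ET :: "nat \<Rightarrow> nat set set"
  assumes "valid_instance n R S M"
    and "\<forall>t<k. is_connecting_tree n R S M (VT t) (ET t)"
    and "\<forall>t<k. \<forall>t'<k. t \<noteq> t' \<longrightarrow> VT t \<inter> VT t' = {}"
  shows "int (min_index_code_length n R S M)
           \<le> int (V_out n R) - (int (N_conn n R S M) + int k)"
proof -
  define SCC where "SCC = {C. is_leaf_scc n R C \<and> msg_connected S M C}"
  have trees: "out_closed_msg_connected n R S M (VT t)" if "t < k" for t
    using assms(2) that out_closed_msg_connected_connecting_tree by blast
  have trees_disjnt_SCC: "disjnt (VT t) C" if "t < k" and "C \<in> SCC" for t C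
    using assms(2) that unfolding is_connecting_tree_def SCC_def disjnt_def by blast
  have "inj_on VT {..<k}" and "SCC \<inter> VT ` {..<k} = {}"
    using trees assms(3) trees_disjnt_SCC
    unfolding out_closed_msg_connected_def inj_on_def disjnt_def by blast+
  moreover have "finite SCC"
    using finite_leaf_sccs unfolding SCC_def by (rule rev_finite_subset) blast
  ultimately have "card (SCC \<union> VT ` {..<k}) = N_conn n R S M + k"
    by (simp add: card_Un_disjoint card_image N_conn_def flip: SCC_def)
  moreover have "pairwise disjnt (SCC \<union> VT ` {..<k})"
  proof (rule pairwise_disjnt_Un)
    show "pairwise disjnt SCC"
      using leaf_sccs_disjnt unfolding pairwise_def SCC_def by blast
    show "pairwise disjnt (VT ` {..<k})"
      using assms(3) by (auto simp: pairwise_def disjnt_def)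
    show "\<forall>X\<in>SCC. \<forall>Y\<in>VT ` {..<k}. disjnt X Y"
      using trees_disjnt_SCC disjnt_sym by blast
  qed
  moreover have "\<forall>C\<in>SCC \<union> VT ` {..<k}. out_closed_msg_connected n R S M C"
    using trees out_closed_msg_connected_leaf_scc unfolding SCC_def by blast
  ultimately show ?thesis
    using min_index_code_length_add_card_le_V_out[OF assms(1), of "SCC \<union> VT ` {..<k}"]
      \<open>finite SCC\<close> by simp
qed

end
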